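(* Let $n_x,n_v,N\ge 1$, $\Delta t,\Delta x,\Delta v,w>0$, velocities $v_1,\dots,v_{n_v}\in\mathbb{R}$, a matrix $\mathsf{C}\in\mathbb{R}^{n_x\times n_x}$, an initial state $\mathsf{f}^0\in\mathbb{R}^{n_x\times n_v}$ and a target $\mathsf{f}^{\mathrm{eq}}\in\mathbb{R}^{n_x\times n_v}$. All indices are periodic (modulo $n_x$ in the first, modulo $n_v$ in the second index). For $\mathsf{H}\in\mathbb{R}^{n_x}$ define the forward scheme, for $n=0,\dots,N-1$: (i) $\mathsf{f}^{n,\star}_{:,j}=S_{-v_j\Delta t/(2\Delta x)}\,\mathsf{f}^n_{:,j}$ for each $j$; (ii) $\mathsf{E}^{n,\star}=\mathsf{C}(\mathbf{1}-\rho^{n,\star})$ with $\rho^{n,\star}_i=w\sum_j\mathsf{f}^{n,\star}_{ij}$, and $\sigma^n_i=(\mathsf{E}^{n,\star}_i+\mathsf{H}_i)\Delta t/\Delta v$; (iii) $\mathsf{f}^{n,\star\star}_{i,:}=S_{\sigma^n_i}\,\mathsf{f}^{n,\star}_{i,:}$ for each $i$ (acting on the row viewed as a vector in $\mathbb{R}^{n_v}$); (iv) $\mathsf{f}^{n+1}_{:,j}=S_{-v_j\Delta t/(2\Delta x)}\,\mathsf{f}^{n,\star\star}_{:,j}$ for each $j$; and let $\mathsf{J}(\mathsf{H})=\frac{\Delta x\Delta v}{2}\sum_{i,j}|\mathsf{f}^N_{ij}-\mathsf{f}^{\mathrm{eq}}_{ij}|^2$. Define the adjoint recursion: $\mathsf{g}^N=\mathsf{f}^N-\mathsf{f}^{\mathrm{eq}}$,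 and for $n=N-1,\dots,0$: $\mathsf{g}^{n,\star\star}_{:,j}=S_{-v_j\Delta t/(2\Delta x)}^{\top}\mathsf{g}^{n+1}_{:,j}$; $D^n_{ij}=\frac{\Delta t}{\Delta v}\big(\mathsf{f}^{n,\star}_{i,j+\mathrm{n}(\sigma^n_i)+1}-\mathsf{f}^{n,\star}_{i,j+\mathrm{n}(\sigma^n_i)}\big)\mathsf{g}^{n,\star\star}_{ij}$, $d^n_i=\sum_j D^n_{ij}$; $\mathsf{g}^{n,\star}_{kl}=\big(S_{\sigma^n_k}^{\top}\mathsf{g}^{n,\star\star}_{k,:}\big)_l-w\,(\mathsf{C}^{\top}d^n)_k$; $\mathsf{g}^{n}_{:,j}=S_{-v_j\Delta t/(2\Delta x)}^{\top}\mathsf{g}^{n,\star}_{:,j}$. Then, at any $\mathsf{H}$ for which no $\sigma^n_i$ ($0\le n<N$, $1\le i\le n_x$) is an integer, $\mathsf{J}$ is differentiable and $$\frac{\partial\mathsf{J}}{\partial\mathsf{H}_i}=\Delta x\,\Delta v\sum_{n=0}^{N-1}d^n_i,\qquad i=1,\dots,n_x .$$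
   Context: For an integer $m\ge 2$ and $s\in\mathbb{R}$, write $\mathrm{n}(s)=\lfloor s\rfloor$, $\alpha(s)=s-\lfloor s\rfloor$, and let $S_s\in\mathbb{R}^{m\times m}$ be given by $(S_su)_k=(1-\alpha(s))u_{k+\mathrm{n}(s)}+\alpha(s)u_{k+\mathrm{n}(s)+1}$ with indices mod $m$ (here $m=n_x$ for the $x$-steps and $m=n_v$ for the $v$-step). The forward scheme is the Strang-split semi-Lagrangian discretization (half step in $x$, full step in $v$ with the self-consistent field plus external field $\mathsf{H}$, half step in $x$) of the 1D Vlasov–Poisson equation $\partial_tf+v\partial_xf-(H+E[f])\partial_vf=0$; $\mathsf{g}^n,\mathsf{g}^{n,\star},\mathsf{g}^{n,\star\star}$ are the discrete adjoint states (Lagrange multipliers). *)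

theory Defs
  imports "HOL-Analysis.Analysis"
begin

text \<open>Parameters of the discretization. Grid indices are 0-based naturals,
  taken modulo nx (first index) and nv (second index).\<close>

record vpparams =
  nx :: nat
  nv :: nat
  Nt :: nat
  dt :: real
  dx :: real
  dv :: real
  wq :: real
  vel :: "nat \<Rightarrow> real"
  Cm :: "nat \<Rightarrow> nat \<Rightarrow> real"
  finit :: "nat \<Rightarrow> nat \<Rightarrow> real"
  feq :: "nat \<Rightarrow> nat \<Rightarrow> real"

definition idx :: "nat \<Rightarrow> int \<Rightarrow> nat" where
  "idx m z = nat (z mod int m)"

definition shiftS :: "nat \<Rightarrow> real \<Rightarrow> (nat \<Rightarrow> real) \<Rightarrow> nat \<Rightarrow> real" where
  "shiftS m s u k = (1 - frac s) * u (idx m (int k + \<lfloor>s\<rfloor>))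
                    + frac s * u (idx m (int k + \<lfloor>s\<rfloor> + 1))"

definition Smat :: "nat \<Rightarrow> real \<Rightarrow> nat \<Rightarrow> nat \<Rightarrow> real" where
  "Smat m s k l = (if l = idx m (int k + \<lfloor>s\<rfloor>) then 1 - frac s else 0)
                + (if l = idx m (int k + \<lfloor>s\<rfloor> + 1) then frac s else 0)"

definition shiftST :: "nat \<Rightarrow> real \<Rightarrow> (nat \<Rightarrow> real) \<Rightarrow> nat \<Rightarrow> real" where
  "shiftST m s u l = (\<Sum>k<m. Smat m s k l * u k)"

definition xshift :: "vpparams \<Rightarrow> nat \<Rightarrow> real" where
  "xshift P j = - vel P j * dt P / (2 * dx P)"

definition xhalf :: "vpparams \<Rightarrow> (nat \<Rightarrow> nat \<Rightarrow> real) \<Rightarrow> nat \<Rightarrow> nat \<Rightarrow> real" where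
  "xhalf P f i j = shiftS (nx P) (xshift P j) (\<lambda>k. f k j) i"

definition xhalfT :: "vpparams \<Rightarrow> (nat \<Rightarrow> nat \<Rightarrow> real) \<Rightarrow> nat \<Rightarrow> nat \<Rightarrow> real" where
  "xhalfT P g i j = shiftST (nx P) (xshift P j) (\<lambda>k. g k j) i"

definition rho :: "vpparams \<Rightarrow> (nat \<Rightarrow> nat \<Rightarrow> real) \<Rightarrow> nat \<Rightarrow> real" where
  "rho P f i = wq P * (\<Sum>j<nv P. f i j)"

definition Efield :: "vpparams \<Rightarrow> (nat \<Rightarrow> nat \<Rightarrow> real) \<Rightarrow> nat \<Rightarrow> real" where
  "Efield P f i = (\<Sum>k<nx P. Cm P i k * (1 - rho P f k))"

definition sigfun :: "vpparams \<Rightarrow> (nat \<Rightarrow> real) \<Rightarrow> (nat \<Rightarrow> nat \<Rightarrow> real) \<Rightarrow> nat \<Rightarrow> real" where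
  "sigfun P H f i = (Efield P f i + H i) * dt P / dv P"

definition vstep :: "vpparams \<Rightarrow> (nat \<Rightarrow> real) \<Rightarrow> (nat \<Rightarrow> nat \<Rightarrow> real) \<Rightarrow> nat \<Rightarrow> nat \<Rightarrow> real" where
  "vstep P H f i j = shiftS (nv P) (sigfun P H f i) (\<lambda>l. f i l) j"

primrec fwd :: "vpparams \<Rightarrow> (nat \<Rightarrow> real) \<Rightarrow> nat \<Rightarrow> nat \<Rightarrow> nat \<Rightarrow> real" where
  "fwd P H 0 = finit P"
| "fwd P H (Suc n) = xhalf P (vstep P H (xhalf P (fwd P H n)))"

definition fstar :: "vpparams \<Rightarrow> (nat \<Rightarrow> real) \<Rightarrow> nat \<Rightarrow> nat \<Rightarrow> nat \<Rightarrow> real" where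
  "fstar P H n = xhalf P (fwd P H n)"

definition sig :: "vpparams \<Rightarrow> (nat \<Rightarrow> real) \<Rightarrow> nat \<Rightarrow> nat \<Rightarrow> real" where
  "sig P H n i = sigfun P H (fstar P H n) i"

definition Jcost :: "vpparams \<Rightarrow> (nat \<Rightarrow> real) \<Rightarrow> real" where
  "Jcost P H = dx P * dv P / 2 *
     (\<Sum>i<nx P. \<Sum>j<nv P. \<bar>fwd P H (Nt P) i j - feq P i j\<bar>^2)"

definition gss :: "vpparams \<Rightarrow> (nat \<Rightarrow> nat \<Rightarrow> real) \<Rightarrow> nat \<Rightarrow> nat \<Rightarrow> real" where
  "gss P gnext = xhalfT P gnext"

definition dvec :: "vpparams \<Rightarrow> (nat \<Rightarrow> real) \<Rightarrow> nat \<Rightarrow> (nat \<Rightarrow> nat \<Rightarrow> real) \<Rightarrow> nat \<Rightarrow> real" where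
  "dvec P H n gnext i = (\<Sum>j<nv P.
      dt P / dv P *
      (fstar P H n i (idx (nv P) (int j + \<lfloor>sig P H n i\<rfloor> + 1))
       - fstar P H n i (idx (nv P) (int j + \<lfloor>sig P H n i\<rfloor>)))
      * gss P gnext i j)"

definition gstar :: "vpparams \<Rightarrow> (nat \<Rightarrow> real) \<Rightarrow> nat \<Rightarrow> (nat \<Rightarrow> nat \<Rightarrow> real) \<Rightarrow> nat \<Rightarrow> nat \<Rightarrow> real" where
  "gstar P H n gnext k l =
     shiftST (nv P) (sig P H n k) (\<lambda>j. gss P gnext k j) l
     - wq P * (\<Sum>i<nx P. Cm P i k * dvec P H n gnext i)"

definition adjstep :: "vpparams \<Rightarrow> (nat \<Rightarrow> real) \<Rightarrow> nat \<Rightarrow> (nat \<Rightarrow> nat \<Rightarrow> real) \<Rightarrow> nat \<Rightarrow> nat \<Rightarrow> real" where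
  "adjstep P H n gnext = xhalfT P (gstar P H n gnext)"

text \<open>gback P H m = g^{N-m}.\<close>
primrec gback :: "vpparams \<Rightarrow> (nat \<Rightarrow> real) \<Rightarrow> nat \<Rightarrow> nat \<Rightarrow> nat \<Rightarrow> real" where
  "gback P H 0 = (\<lambda>i j. fwd P H (Nt P) i j - feq P i j)"
| "gback P H (Suc m) = adjstep P H (Nt P - Suc m) (gback P H m)"

definition gadj :: "vpparams \<Rightarrow> (nat \<Rightarrow> real) \<Rightarrow> nat \<Rightarrow> nat \<Rightarrow> nat \<Rightarrow> real" where
  "gadj P H n = gback P H (Nt P - n)"

definition dadj :: "vpparams \<Rightarrow> (nat \<Rightarrow> real) \<Rightarrow> nat \<Rightarrow> nat \<Rightarrow> real" where
  "dadj P H n i = dvec P H n (gadj P H (n + 1)) i"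

text \<open>Turning a vector H in R^{nx} (index type 'n) into a periodic-index function
  via an enumeration e of the index type onto {0..<nx}.\<close>
definition Hfun :: "('n \<Rightarrow> nat) \<Rightarrow> real^'n \<Rightarrow> nat \<Rightarrow> real" where
  "Hfun e H i = H $ (inv_into UNIV e i)"

end

theory Submission
  imports Defs
begin

text \<open>Away from integer shifts the floor in every v-step is locally constant, so the scheme is
  smooth in H and its derivative in direction h is the tangent recursion obtained by
  linearizing each step. Moving every transpose across the Frobenius pairing of grid
  functions shows that the adjoint recursion gives
  \<open>\<langle>g\<^sup>n\<^sup>+\<^sup>1, \<delta>f\<^sup>n\<^sup>+\<^sup>1\<rangle> = \<langle>g\<^sup>n, \<delta>f\<^sup>n\<rangle> + \<Sum>\<^sub>i h\<^sub>i d\<^sup>n\<^sub>i\<close>;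
  since \<open>\<delta>f\<^sup>0 = 0\<close> this telescopes, and
  \<open>\<langle>g\<^sup>N, \<delta>f\<^sup>N\<rangle>\<close> is the derivative of J up to the factor \<open>\<Delta>x \<Delta>v\<close>.\<close>

lemma idx_less: "m \<ge> 1 \<Longrightarrow> idx m z < m"
  unfolding idx_def by (simp add: nat_less_iff)

lemma shiftS_eq_sum_Smat:
  assumes "m \<ge> 1"
  shows "shiftS m s u k = (\<Sum>l<m. Smat m s k l * u l)"
proof -
  have pick: "(\<Sum>l<m. (if l = a then c else 0) * u l) = c * u a" if "a < m" for a c
    using that by (simp add: if_distrib[where f = "\<lambda>x. x * _"] sum.delta' cong: if_cong)
  show ?thesis
    unfolding shiftS_def Smat_def distrib_right sum.distrib
    by (simp only: pick idx_less[OF assms])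
qed

lemma sum_mult_shiftS_eq_shiftST:
  assumes "m \<ge> 1"
  shows "(\<Sum>l<m. g l * shiftS m s u l) = (\<Sum>l<m. shiftST m s g l * u l)"
proof -
  have "(\<Sum>l<m. g l * shiftS m s u l) = (\<Sum>l<m. \<Sum>p<m. g l * (Smat m s l p * u p))"
    by (simp add: shiftS_eq_sum_Smat[OF assms] sum_distrib_left)
  also have "\<dots> = (\<Sum>p<m. \<Sum>l<m. g l * (Smat m s l p * u p))"
    by (rule sum.swap)
  also have "\<dots> = (\<Sum>p<m. shiftST m s g p * u p)"
    by (simp add: shiftST_def sum_distrib_left mult_ac)
  finally show ?thesis .
qed

lemma has_derivative_shiftS:
  fixes s :: "'a::real_normed_vector \<Rightarrow> real" and u :: "'a \<Rightarrow> nat \<Rightarrow> real"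
  assumes m: "m \<ge> 1" and ds: "(s has_derivative Ds) (at x)" and s_nonint: "s x \<notin> \<int>"
    and du: "\<And>l. l < m \<Longrightarrow> ((\<lambda>y. u y l) has_derivative Du l) (at x)"
  shows "((\<lambda>y. shiftS m (s y) (u y) k) has_derivative
          (\<lambda>h. shiftS m (s x) (\<lambda>l. Du l h) k
               + Ds h * (u x (idx m (int k + \<lfloor>s x\<rfloor> + 1)) - u x (idx m (int k + \<lfloor>s x\<rfloor>))))) (at x)"
proof -
  define a where "a = idx m (int k + \<lfloor>s x\<rfloor>)"
  define b where "b = idx m (int k + \<lfloor>s x\<rfloor> + 1)"
  define F where "F = real_of_int \<lfloor>s x\<rfloor>"
  let ?frozen = "\<lambda>y. (1 - (s y - F)) * u y a + (s y - F) * u y b"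
  have "(?frozen has_derivative (\<lambda>h. (- Ds h) * u x a + (1 - (s x - F)) * Du a h
        + (Ds h * u x b + (s x - F) * Du b h))) (at x)"
    using ds du idx_less[OF m] unfolding a_def b_def by (auto intro!: derivative_eq_intros)
  then have frozen: "(?frozen has_derivative (\<lambda>h. shiftS m (s x) (\<lambda>l. Du l h) k
               + Ds h * (u x b - u x a))) (at x)"
    by (rule has_derivative_eq_rhs)
       (auto simp: shiftS_def a_def b_def F_def frac_def algebra_simps)
  have "(s \<longlongrightarrow> s x) (at x)"
    using has_derivative_continuous[OF ds] by (simp add: continuous_at)
  then have "\<forall>\<^sub>F y in at x. \<lfloor>s y\<rfloor> = \<lfloor>s x\<rfloor>"
    using s_nonint by (rule eventually_floor_eq)
  then have "\<forall>\<^sub>F y in at x. ?frozen y = shiftS m (s y) (u y) k"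
    by eventually_elim (auto simp: shiftS_def a_def b_def F_def frac_def)
  then show ?thesis unfolding a_def[symmetric] b_def[symmetric]
    by (rule has_derivative_transform_eventually[OF frozen])
       (auto simp: shiftS_def a_def b_def F_def frac_def)
qed

lemma has_derivative_shiftS_const:
  fixes u :: "'a::real_normed_vector \<Rightarrow> nat \<Rightarrow> real"
  assumes m: "m \<ge> 1"
    and du: "\<And>l. l < m \<Longrightarrow> ((\<lambda>y. u y l) has_derivative Du l) (at x)"
  shows "((\<lambda>y. shiftS m s (u y) k) has_derivative (\<lambda>h. shiftS m s (\<lambda>l. Du l h) k)) (at x)"
  unfolding shiftS_def using du[OF idx_less[OF m]] by (auto intro!: derivative_eq_intros)

lemma has_derivative_Hfun: "((\<lambda>y. Hfun e y i) has_derivative (\<lambda>h. Hfun e h i)) (at x)"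
  unfolding Hfun_def by (rule bounded_linear_imp_has_derivative) (rule bounded_linear_vec_nth)

lemma Hfun_axis:
  assumes "i \<in> range e" "k \<in> range e"
  shows "Hfun e (axis (inv_into UNIV e i) 1) k = (if k = i then 1 else 0)"
  using assms by (auto simp: Hfun_def axis_def dest: inv_into_injective)

definition grid_inner :: "vpparams \<Rightarrow> (nat \<Rightarrow> nat \<Rightarrow> real) \<Rightarrow> (nat \<Rightarrow> nat \<Rightarrow> real) \<Rightarrow> real" where
  "grid_inner P a b = (\<Sum>i<nx P. \<Sum>j<nv P. a i j * b i j)"

lemma grid_inner_xhalf:
  assumes "nx P \<ge> 1"
  shows "grid_inner P g (xhalf P f) = grid_inner P (xhalfT P g) f"
proof -
  have "grid_inner P g (xhalf P f) = (\<Sum>j<nv P. \<Sum>i<nx P. g i j * xhalf P f i j)"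
    unfolding grid_inner_def by (rule sum.swap)
  also have "\<dots> = (\<Sum>j<nv P. \<Sum>i<nx P. xhalfT P g i j * f i j)"
    unfolding xhalf_def xhalfT_def by (intro sum.cong refl sum_mult_shiftS_eq_shiftST[OF assms])
  also have "\<dots> = grid_inner P (xhalfT P g) f"
    unfolding grid_inner_def by (rule sum.swap)
  finally show ?thesis .
qed

definition Efield_lin :: "vpparams \<Rightarrow> (nat \<Rightarrow> nat \<Rightarrow> real) \<Rightarrow> nat \<Rightarrow> real" where
  "Efield_lin P df i = - wq P * (\<Sum>k<nx P. Cm P i k * (\<Sum>j<nv P. df k j))"

definition vjump :: "vpparams \<Rightarrow> (nat \<Rightarrow> real) \<Rightarrow> (nat \<Rightarrow> nat \<Rightarrow> real) \<Rightarrow> nat \<Rightarrow> nat \<Rightarrow> real" where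
  "vjump P H f i l = f i (idx (nv P) (int l + \<lfloor>sigfun P H f i\<rfloor> + 1))
                   - f i (idx (nv P) (int l + \<lfloor>sigfun P H f i\<rfloor>))"

definition vstep_lin :: "vpparams \<Rightarrow> (nat \<Rightarrow> real) \<Rightarrow> (nat \<Rightarrow> real) \<Rightarrow> (nat \<Rightarrow> nat \<Rightarrow> real)
    \<Rightarrow> (nat \<Rightarrow> nat \<Rightarrow> real) \<Rightarrow> nat \<Rightarrow> nat \<Rightarrow> real" where
  "vstep_lin P H h f df i l = shiftS (nv P) (sigfun P H f i) (\<lambda>l. df i l) l
     + (Efield_lin P df i + h i) * dt P / dv P * vjump P H f i l"

primrec fwd_lin :: "vpparams \<Rightarrow> (nat \<Rightarrow> real) \<Rightarrow> (nat \<Rightarrow> real) \<Rightarrow> nat \<Rightarrow> nat \<Rightarrow> nat \<Rightarrow> real" where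
  "fwd_lin P H h 0 = (\<lambda>i j. 0)"
| "fwd_lin P H h (Suc n) = xhalf P (vstep_lin P H h (fstar P H n) (xhalf P (fwd_lin P H h n)))"

lemma has_derivative_sigfun:
  fixes F :: "real^'n \<Rightarrow> nat \<Rightarrow> nat \<Rightarrow> real"
  assumes dF: "\<And>k j. k < nx P \<Longrightarrow> j < nv P \<Longrightarrow> ((\<lambda>y. F y k j) has_derivative (\<lambda>h. DF h k j)) (at x)"
  shows "((\<lambda>y. sigfun P (Hfun e y) (F y) i) has_derivative
     (\<lambda>h. (Efield_lin P (DF h) i + Hfun e h i) * dt P / dv P)) (at x)"
  unfolding sigfun_def Efield_def rho_def times_divide_eq_right[symmetric]
  by (rule has_derivative_eq_rhs, (rule derivative_eq_intros dF has_derivative_Hfun refl | simp)+)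
     (simp add: Efield_lin_def sum_negf sum_distrib_left mult_ac)

lemma has_derivative_vstep:
  fixes F :: "real^'n \<Rightarrow> nat \<Rightarrow> nat \<Rightarrow> real"
  assumes dF: "\<And>k j. k < nx P \<Longrightarrow> j < nv P \<Longrightarrow> ((\<lambda>y. F y k j) has_derivative (\<lambda>h. DF h k j)) (at x)"
    and "nv P \<ge> 1" "i < nx P" "sigfun P (Hfun e x) (F x) i \<notin> \<int>"
  shows "((\<lambda>y. vstep P (Hfun e y) (F y) i j) has_derivative
     (\<lambda>h. vstep_lin P (Hfun e x) (Hfun e h) (F x) (DF h) i j)) (at x)"
  unfolding vstep_def vstep_lin_def vjump_def
  by (rule has_derivative_shiftS[OF _ has_derivative_sigfun[OF dF]]) (use assms in auto)

lemma has_derivative_xhalf: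
  fixes F :: "real^'n \<Rightarrow> nat \<Rightarrow> nat \<Rightarrow> real"
  assumes "\<And>k. k < nx P \<Longrightarrow> ((\<lambda>y. F y k j) has_derivative (\<lambda>h. DF h k j)) (at x)"
    and "nx P \<ge> 1"
  shows "((\<lambda>y. xhalf P (F y) i j) has_derivative (\<lambda>h. xhalf P (DF h) i j)) (at x)"
  unfolding xhalf_def by (rule has_derivative_shiftS_const) (use assms in auto)

lemma has_derivative_fwd:
  fixes x :: "real^'n"
  assumes nx1: "nx P \<ge> 1" and nv1: "nv P \<ge> 1"
    and nonint: "\<forall>n<Nt P. \<forall>i<nx P. sig P (Hfun e x) n i \<notin> \<int>"
  shows "n \<le> Nt P \<Longrightarrow> i < nx P \<Longrightarrow>
    ((\<lambda>y. fwd P (Hfun e y) n i j) has_derivative (\<lambda>h. fwd_lin P (Hfun e x) (Hfun e h) n i j)) (at x)"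
proof (induction n arbitrary: i j)
  case 0
  then show ?case by simp
next
  case (Suc n)
  have "((\<lambda>y. xhalf P (fwd P (Hfun e y) n) k j) has_derivative
     (\<lambda>h. xhalf P (fwd_lin P (Hfun e x) (Hfun e h) n) k j)) (at x)" for k j
    by (rule has_derivative_xhalf[OF _ nx1]) (use Suc in auto)
  then have "((\<lambda>y. vstep P (Hfun e y) (xhalf P (fwd P (Hfun e y) n)) k j) has_derivative
     (\<lambda>h. vstep_lin P (Hfun e x) (Hfun e h) (fstar P (Hfun e x) n)
        (xhalf P (fwd_lin P (Hfun e x) (Hfun e h) n)) k j)) (at x)" if "k < nx P" for k j
    unfolding fstar_def
    by (rule has_derivative_vstep[OF _ nv1 that])
       (use nonint Suc.prems that in \<open>auto simp: sig_def fstar_def\<close>)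
  then show ?case
    by (simp only: fwd.simps fwd_lin.simps) (rule has_derivative_xhalf[OF _ nx1])
qed

lemma sum_Efield_lin_mult:
  "(\<Sum>i<nx P. Efield_lin P df i * d i)
     = (\<Sum>k<nx P. \<Sum>l<nv P. - wq P * (\<Sum>i<nx P. Cm P i k * d i) * df k l)"
proof -
  have "(\<Sum>i<nx P. Efield_lin P df i * d i)
      = (\<Sum>i<nx P. \<Sum>k<nx P. \<Sum>l<nv P. - wq P * (Cm P i k * d i) * df k l)"
    unfolding Efield_lin_def by (simp add: sum_distrib_left sum_distrib_right mult_ac)
  also have "\<dots> = (\<Sum>k<nx P. \<Sum>i<nx P. \<Sum>l<nv P. - wq P * (Cm P i k * d i) * df k l)"
    by (rule sum.swap)
  also have "\<dots> = (\<Sum>k<nx P. \<Sum>l<nv P. - wq P * (\<Sum>i<nx P. Cm P i k * d i) * df k l)"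
    by (simp add: sum.swap[where B = "{..<nv P}"] sum_distrib_left sum_distrib_right mult_ac)
  finally show ?thesis .
qed

lemma grid_inner_vstep_lin:
  assumes "nv P \<ge> 1"
    and d_def: "\<And>i. d i = (\<Sum>l<nv P. dt P / dv P * vjump P H f i l * G i l)"
  shows "grid_inner P G (vstep_lin P H h f df)
     = grid_inner P (\<lambda>k l. shiftST (nv P) (sigfun P H f k) (\<lambda>j. G k j) l
                            - wq P * (\<Sum>i<nx P. Cm P i k * d i)) df
       + (\<Sum>i<nx P. h i * d i)"
proof -
  have row: "(\<Sum>l<nv P. G i l * vstep_lin P H h f df i l)
       = (\<Sum>l<nv P. shiftST (nv P) (sigfun P H f i) (\<lambda>j. G i j) l * df i l)
         + (Efield_lin P df i + h i) * d i" for i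
    unfolding vstep_lin_def d_def distrib_left sum.distrib sum_distrib_left
      sum_mult_shiftS_eq_shiftST[OF assms(1)]
    by (simp add: mult_ac)
  show ?thesis
    unfolding grid_inner_def row sum.distrib distrib_right sum_Efield_lin_mult
      left_diff_distrib sum_subtractf
    by (simp add: sum_negf)
qed

lemma grid_inner_fwd_lin_Suc:
  assumes "nx P \<ge> 1" "nv P \<ge> 1"
  shows "grid_inner P gnext (fwd_lin P H h (Suc n))
     = grid_inner P (adjstep P H n gnext) (fwd_lin P H h n) + (\<Sum>i<nx P. h i * dvec P H n gnext i)"
proof -
  have "grid_inner P gnext (fwd_lin P H h (Suc n))
      = grid_inner P (gss P gnext) (vstep_lin P H h (fstar P H n) (xhalf P (fwd_lin P H h n)))"
    by (simp add: grid_inner_xhalf[OF assms(1)] gss_def)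
  also have "\<dots> = grid_inner P (gstar P H n gnext) (xhalf P (fwd_lin P H h n))
                 + (\<Sum>i<nx P. h i * dvec P H n gnext i)"
    by (subst grid_inner_vstep_lin[OF assms(2)])
       (simp_all add: dvec_def vjump_def sig_def gstar_def[abs_def])
  finally show ?thesis
    by (simp add: grid_inner_xhalf[OF assms(1)] adjstep_def)
qed

lemma gadj_eq_adjstep: "n < Nt P \<Longrightarrow> gadj P H n = adjstep P H n (gadj P H (Suc n))"
  unfolding gadj_def by (simp add: Suc_diff_Suc[symmetric])

lemma grid_inner_gadj_fwd_lin:
  assumes "nx P \<ge> 1" "nv P \<ge> 1"
  shows "m \<le> Nt P \<Longrightarrow> grid_inner P (gadj P H m) (fwd_lin P H h m)
           = (\<Sum>n<m. \<Sum>i<nx P. h i * dadj P H n i)"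
proof (induction m)
  case 0
  then show ?case by (simp add: grid_inner_def)
next
  case (Suc m)
  then have "gadj P H m = adjstep P H m (gadj P H (Suc m))"
    by (simp add: gadj_eq_adjstep)
  with Suc show ?case
    by (simp add: grid_inner_fwd_lin_Suc[OF assms] dadj_def del: fwd_lin.simps)
qed

lemma has_derivative_Jcost:
  fixes x :: "real^'n"
  assumes "nx P \<ge> 1" "nv P \<ge> 1"
    and "\<forall>n<Nt P. \<forall>i<nx P. sig P (Hfun e x) n i \<notin> \<int>"
  shows "((\<lambda>y. Jcost P (Hfun e y)) has_derivative
          (\<lambda>h. dx P * dv P * grid_inner P (gadj P (Hfun e x) (Nt P))
                                           (fwd_lin P (Hfun e x) (Hfun e h) (Nt P)))) (at x)"
  unfolding Jcost_def power2_abs unfolding power2_eq_square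
  by (rule has_derivative_eq_rhs,
      (rule derivative_eq_intros has_derivative_fwd[OF assms order.refl] refl | simp)+)
     (simp add: fun_eq_iff grid_inner_def gadj_def sum_distrib_left sum_divide_distrib;
      intro allI sum.cong refl; simp add: field_simps)

theorem mainTheorem3:
  fixes P :: vpparams and e :: "'n::finite \<Rightarrow> nat" and H :: "real^'n"
  assumes "nx P \<ge> 1" "nv P \<ge> 1" "Nt P \<ge> 1"
    and "dt P > 0" "dx P > 0" "dv P > 0" "wq P > 0"
    and "CARD('n) = nx P" "bij_betw e UNIV {..<nx P}"
    and "\<forall>n<Nt P. \<forall>i<nx P. sig P (Hfun e H) n i \<notin> \<int>"
  shows "\<exists>L. ((\<lambda>H'. Jcost P (Hfun e H')) has_derivative L) (at H) \<and>
           (\<forall>i<nx P. L (axis (inv_into UNIV e i) 1)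
              = dx P * dv P * (\<Sum>n<Nt P. dadj P (Hfun e H) n i))"
proof (intro exI conjI allI impI)
  show "((\<lambda>H'. Jcost P (Hfun e H')) has_derivative
          (\<lambda>h. dx P * dv P * grid_inner P (gadj P (Hfun e H) (Nt P))
                                           (fwd_lin P (Hfun e H) (Hfun e h) (Nt P)))) (at H)"
    using assms(1,2,10) by (rule has_derivative_Jcost)
  fix i assume i: "i < nx P"
  have range_e: "range e = {..<nx P}"
    using assms(9) by (simp add: bij_betw_def)
  have "(\<Sum>k<nx P. Hfun e (axis (inv_into UNIV e i) 1) k * dadj P (Hfun e H) n k)
        = dadj P (Hfun e H) n i" for n
    using i by (simp add: Hfun_axis range_e if_distrib[where f = "\<lambda>x. x * _"] sum.delta'
                          cong: if_cong)
  then show "dx P * dv P * grid_inner P (gadj P (Hfun e H) (Nt P))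
               (fwd_lin P (Hfun e H) (Hfun e (axis (inv_into UNIV e i) 1)) (Nt P))
             = dx P * dv P * (\<Sum>n<Nt P. dadj P (Hfun e H) n i)"
    by (simp add: grid_inner_gadj_fwd_lin[OF assms(1,2) order.refl])
qed

end
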